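(* Let $Y,X\sim\mathcal{U}(0,1)$ with copula $C_{Y,X}$ and let $\mu$ be a functional on $\mathcal{C}^\uparrow$ as below. Then $\mathsf{R}_\mu(Y,X)=\mu(\mathcal{S}(C_{Y,X}\vee\Pi))$.
   Context: $\mathcal{C}^\uparrow$ is the class of SI copulas (bivariate copulas $C$ with $C(v,\cdot)$ concave for all $v$). $\mu:\mathcal{C}^\uparrow\to[0,1]$ satisfies $\mu(C)=0$ iff $C=\Pi$ and $\mu(C)=1$ iff $C=M$, where $\Pi(u,v)=uv$, $M(u,v)=\min\{u,v\}$. $\partial_2$ is the partial derivative in the second argument. For measurable $h:(0,1)\to[0,1]$, $h^*$ is the a.e.-unique decreasing function with $\lambda(h^*\le y)=\lambda(h\le y)$ for all $y$; $C^\uparrow(v,u):=\int_0^uh_v^*(t)\,dt$ with $h_v=\partial_2C(v,\cdot)$. The rearranged dependence measure is $\mathsf{R}_\mu(Y,X):=\mu(C^\uparrow_{Y,X})$. Upper product: $D\vee E(u,v):=\int_0^1\min\{\partial_2D(u,t),\partial_2E(v,t)\}\,dt$. For $C\in\mathcal{C}^\uparrow$: $\partial_2^+C(v,t):=\lim_{s\downarrow t}\partial_2C(v,s)$, $f^{-1}(w):=\inf\{t\in[0,1]:f(t)\le w\}$, and $\mathcal{S}(C)(v,u):=\int_0^u(\partial_2^+C(v,\cdot))^{-1}(t)\,dt$. *)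

theory Defs
  imports "HOL-Analysis.Analysis"
begin

text \<open>Bivariate functions are real \<Rightarrow> real \<Rightarrow> real; copulas are normalised to be 0
  outside the unit square, so that equality of copulas is equality of functions.\<close>

definition restrict_sq :: "(real \<Rightarrow> real \<Rightarrow> real) \<Rightarrow> real \<Rightarrow> real \<Rightarrow> real" where
  "restrict_sq f = (\<lambda>u v. if u \<in> {0..1} \<and> v \<in> {0..1} then f u v else 0)"

definition PiC :: "real \<Rightarrow> real \<Rightarrow> real" where
  "PiC = restrict_sq (\<lambda>u v. u * v)"

definition MC :: "real \<Rightarrow> real \<Rightarrow> real" where
  "MC = restrict_sq (\<lambda>u v. min u v)"

definition is_copula :: "(real \<Rightarrow> real \<Rightarrow> real) \<Rightarrow> bool" where
  "is_copula C \<longleftrightarrow>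
     (\<forall>u v. \<not> (u \<in> {0..1} \<and> v \<in> {0..1}) \<longrightarrow> C u v = 0) \<and>
     (\<forall>u\<in>{0..1}. C u 0 = 0 \<and> C 0 u = 0 \<and> C u 1 = u \<and> C 1 u = u) \<and>
     (\<forall>u1 u2 v1 v2. 0 \<le> u1 \<longrightarrow> u1 \<le> u2 \<longrightarrow> u2 \<le> 1 \<longrightarrow> 0 \<le> v1 \<longrightarrow> v1 \<le> v2 \<longrightarrow> v2 \<le> 1
        \<longrightarrow> C u2 v2 - C u2 v1 - C u1 v2 + C u1 v1 \<ge> 0)"

definition is_SI_copula :: "(real \<Rightarrow> real \<Rightarrow> real) \<Rightarrow> bool" where
  "is_SI_copula C \<longleftrightarrow> is_copula C \<and> (\<forall>v\<in>{0..1}. concave_on {0..1} (C v))"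

text \<open>Partial derivative in the second argument (set to 0 where it does not exist,
  which happens only on a null set for copulas).\<close>
definition partial2 :: "(real \<Rightarrow> real \<Rightarrow> real) \<Rightarrow> real \<Rightarrow> real \<Rightarrow> real" where
  "partial2 C v t = (if C v differentiable (at t) then deriv (C v) t else 0)"

text \<open>Decreasing rearrangement on (0,1): a decreasing function with the same
  distribution (it is a.e. unique).\<close>
definition decr_rearr :: "(real \<Rightarrow> real) \<Rightarrow> real \<Rightarrow> real" where
  "decr_rearr h = (SOME g. (\<forall>s t. 0 < s \<longrightarrow> s \<le> t \<longrightarrow> t < 1 \<longrightarrow> g t \<le> g s) \<and>
      (\<forall>y. measure lborel {t\<in>{0<..<1}. g t \<le> y} = measure lborel {t\<in>{0<..<1}. h t \<le> y}))"

definition rearranged :: "(real \<Rightarrow> real \<Rightarrow> real) \<Rightarrow> real \<Rightarrow> real \<Rightarrow> real" where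
  "rearranged C = restrict_sq (\<lambda>v u. integral {0..u} (decr_rearr (partial2 C v)))"

definition Rmu :: "((real \<Rightarrow> real \<Rightarrow> real) \<Rightarrow> real) \<Rightarrow> (real \<Rightarrow> real \<Rightarrow> real) \<Rightarrow> real" where
  "Rmu mu C = mu (rearranged C)"

definition upper_prod :: "(real \<Rightarrow> real \<Rightarrow> real) \<Rightarrow> (real \<Rightarrow> real \<Rightarrow> real) \<Rightarrow> real \<Rightarrow> real \<Rightarrow> real" where
  "upper_prod D E = restrict_sq (\<lambda>u v. integral {0..1} (\<lambda>t. min (partial2 D u t) (partial2 E v t)))"

definition right_partial2 :: "(real \<Rightarrow> real \<Rightarrow> real) \<Rightarrow> real \<Rightarrow> real \<Rightarrow> real" where
  "right_partial2 C v t =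
     Lim (at t within ({t<..<1} \<inter> {s. C v differentiable (at s)})) (\<lambda>s. deriv (C v) s)"

text \<open>Generalised inverse f^{-1}(w) = inf {t in [0,1] : f t <= w}, with inf of the
  empty set (and the value at t = 1) treated as 1.\<close>
definition gen_inv :: "(real \<Rightarrow> real) \<Rightarrow> real \<Rightarrow> real" where
  "gen_inv f w = Inf ({t\<in>{0..<1}. f t \<le> w} \<union> {1})"

definition S_op :: "(real \<Rightarrow> real \<Rightarrow> real) \<Rightarrow> real \<Rightarrow> real \<Rightarrow> real" where
  "S_op C = restrict_sq (\<lambda>v u. integral {0..u} (gen_inv (right_partial2 C v)))"

end

theory Submission
  imports Defs "HOL-Probability.Probability"
begin

(* Fix v and let X be the law of t |-> d2 C(v,t) under Lebesgue measure on (0,1), with cdf F.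
   Since d2 Pi(w,t) = w, the upper product is (C \/ Pi)(v,w) = E min(X,w), whose chord slopes
   over [w1,w2] lie between 1 - F(w2) and 1 - F(w1). Hence the right limit of d2 (C \/ Pi)(v,.)
   is 1 - F, whose generalised inverse is the decreasing quantile function of X. Any decreasing
   function on (0,1) distributed like d2 C(v,.), in particular the rearrangement h_v*, agrees with
   that quantile function off its countably many discontinuities, so integrating gives
   C^up = S(C \/ Pi). *)

section \<open>Measurability of derivatives\<close>

definition diff_quot :: "(real \<Rightarrow> real) \<Rightarrow> real \<Rightarrow> real \<Rightarrow> real" where
  "diff_quot g t y = (g y - g t) / (y - t)"

(* Countably many conditions, so for Borel g the set of such t is Borel. *)
definition rat_Cauchy_diff_quot :: "(real \<Rightarrow> real) \<Rightarrow> real \<Rightarrow> bool" where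
  "rat_Cauchy_diff_quot g t \<longleftrightarrow> (\<forall>n::nat. \<exists>m::nat. \<forall>p q::rat.
      0 < \<bar>of_rat p - t\<bar> \<and> \<bar>of_rat p - t\<bar> < 1 / Suc m \<and>
      0 < \<bar>of_rat q - t\<bar> \<and> \<bar>of_rat q - t\<bar> < 1 / Suc m \<longrightarrow>
      \<bar>diff_quot g t (of_rat p) - diff_quot g t (of_rat q)\<bar> \<le> 1 / Suc n)"

lemma diff_quot_tendsto_deriv:
  assumes "g differentiable (at t)"
  shows "(diff_quot g t \<longlongrightarrow> deriv g t) (at t)"
proof -
  have "(g has_field_derivative deriv g t) (at t)"
    using assms by (simp add: DERIV_deriv_iff_real_differentiable)
  then show ?thesis by (simp add: has_field_derivative_iff diff_quot_def[abs_def])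
qed

lemma isCont_diff_quot:
  assumes "continuous_on UNIV g" "y \<noteq> t"
  shows "isCont (diff_quot g t) y"
  using assms unfolding diff_quot_def
  by (intro continuous_intros) (auto simp: continuous_on_eq_continuous_at)

lemma diff_quot_bound_from_rats:
  assumes g: "continuous_on UNIV g"
    and rat_bound: "\<And>p q::rat. 0 < \<bar>of_rat p - t\<bar> \<and> \<bar>of_rat p - t\<bar> < r \<and>
        0 < \<bar>of_rat q - t\<bar> \<and> \<bar>of_rat q - t\<bar> < r \<Longrightarrow>
        \<bar>diff_quot g t (of_rat p) - diff_quot g t (of_rat q)\<bar> \<le> b"
    and y: "0 < \<bar>y - t\<bar>" "\<bar>y - t\<bar> < r" and z: "0 < \<bar>z - t\<bar>" "\<bar>z - t\<bar> < r"
  shows "\<bar>diff_quot g t y - diff_quot g t z\<bar> \<le> b"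
proof -
  let ?B = "{x. 0 < \<bar>x - t\<bar> \<and> \<bar>x - t\<bar> < r}"
  have "open ?B" by (intro open_Collect_conj open_Collect_less continuous_intros)
  have rat_seq: "\<exists>p. (\<forall>k. p k \<in> \<rat>) \<and> p \<longlonglongrightarrow> x" for x :: real
    using Rats_closure_real closure_sequential by blast
  obtain p where p: "\<And>k. p k \<in> \<rat>" "p \<longlonglongrightarrow> y" using rat_seq by blast
  obtain q where q: "\<And>k. q k \<in> \<rat>" "q \<longlonglongrightarrow> z" using rat_seq by blast
  have "eventually (\<lambda>k. p k \<in> ?B) sequentially" "eventually (\<lambda>k. q k \<in> ?B) sequentially"
    using topological_tendstoD[OF p(2) \<open>open ?B\<close>] topological_tendstoD[OF q(2) \<open>open ?B\<close>] y z
    by auto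
  then have "eventually (\<lambda>k. \<bar>diff_quot g t (p k) - diff_quot g t (q k)\<bar> \<le> b) sequentially"
  proof eventually_elim
    case (elim k)
    obtain p' q' where "p k = of_rat p'" "q k = of_rat q'" using p(1) q(1) Rats_cases by metis
    then show ?case using elim rat_bound by auto
  qed
  moreover have "(\<lambda>k. \<bar>diff_quot g t (p k) - diff_quot g t (q k)\<bar>)
      \<longlonglongrightarrow> \<bar>diff_quot g t y - diff_quot g t z\<bar>"
    using isCont_diff_quot[OF g] y z p(2) q(2)
    by (intro tendsto_intros isCont_tendsto_compose[of _ "diff_quot g t"]) auto
  ultimately show ?thesis by (intro tendsto_upperbound) auto
qed

lemma rat_Cauchy_diff_quot_if_differentiable:
  assumes "g differentiable (at t)"
  shows "rat_Cauchy_diff_quot g t"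
  unfolding rat_Cauchy_diff_quot_def
proof
  note lim = diff_quot_tendsto_deriv[OF assms]
  fix n :: nat
  define e :: real where "e = 1 / (2 * Suc n)"
  have "e > 0" "e + e = 1 / Suc n" unfolding e_def by (auto simp: field_simps)
  obtain d where d: "d > 0"
    "\<And>y. y \<noteq> t \<Longrightarrow> \<bar>y - t\<bar> < d \<Longrightarrow> \<bar>diff_quot g t y - deriv g t\<bar> < e"
    using tendstoD[OF lim \<open>e > 0\<close>] by (auto simp: eventually_at dist_real_def)
  obtain m where m: "1 / Suc m < d"
    using reals_Archimedean[OF d(1)] by (auto simp: inverse_eq_divide)
  have "\<bar>diff_quot g t y - diff_quot g t z\<bar> \<le> 1 / Suc n"
    if "0 < \<bar>y - t\<bar>" "\<bar>y - t\<bar> < 1 / Suc m" "0 < \<bar>z - t\<bar>" "\<bar>z - t\<bar> < 1 / Suc m" for y z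
    using d(2)[of y] d(2)[of z] that m \<open>e + e = 1 / Suc n\<close> by auto
  then show "\<exists>m. \<forall>p q::rat. 0 < \<bar>of_rat p - t\<bar> \<and> \<bar>of_rat p - t\<bar> < 1 / Suc m \<and>
      0 < \<bar>of_rat q - t\<bar> \<and> \<bar>of_rat q - t\<bar> < 1 / Suc m \<longrightarrow>
      \<bar>diff_quot g t (of_rat p) - diff_quot g t (of_rat q)\<bar> \<le> 1 / Suc n"
    by blast
qed

lemma differentiable_if_rat_Cauchy_diff_quot:
  assumes g: "continuous_on UNIV g" and Cauchy: "rat_Cauchy_diff_quot g t"
  shows "g differentiable (at t)"
proof -
  have "cauchy_filter (filtermap (diff_quot g t) (at t))"
    unfolding cauchy_filter_metric_filtermap
  proof (intro allI impI)
    fix e :: real assume "e > 0"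
    obtain n where n: "1 / Suc n < e"
      using reals_Archimedean[OF \<open>e > 0\<close>] by (auto simp: inverse_eq_divide)
    obtain m where bnd: "\<And>p q::rat. 0 < \<bar>of_rat p - t\<bar> \<and> \<bar>of_rat p - t\<bar> < 1 / Suc m \<and>
        0 < \<bar>of_rat q - t\<bar> \<and> \<bar>of_rat q - t\<bar> < 1 / Suc m \<Longrightarrow>
        \<bar>diff_quot g t (of_rat p) - diff_quot g t (of_rat q)\<bar> \<le> 1 / Suc n"
      using Cauchy unfolding rat_Cauchy_diff_quot_def by blast
    show "\<exists>P. eventually P (at t) \<and> (\<forall>y z. P y \<and> P z \<longrightarrow> dist (diff_quot g t y) (diff_quot g t z) < e)"
    proof (intro exI conjI allI impI)
      show "eventually (\<lambda>y. 0 < \<bar>y - t\<bar> \<and> \<bar>y - t\<bar> < 1 / Suc m) (at t)"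
        unfolding eventually_at by (rule exI[of _ "1 / Suc m"]) (auto simp: dist_real_def)
      fix y z assume "(0 < \<bar>y - t\<bar> \<and> \<bar>y - t\<bar> < 1 / Suc m) \<and> (0 < \<bar>z - t\<bar> \<and> \<bar>z - t\<bar> < 1 / Suc m)"
      then show "dist (diff_quot g t y) (diff_quot g t z) < e"
        using diff_quot_bound_from_rats[where r="1 / Suc m" and b="1 / Suc n", OF g bnd, of y z] n
        by (simp add: dist_real_def)
    qed
  qed
  then obtain c where "filtermap (diff_quot g t) (at t) \<le> nhds c"
    using cauchy_filter_complete_converges[of "filtermap (diff_quot g t) (at t)" UNIV]
    by (auto simp: complete_UNIV filtermap_bot_iff)
  then have "(diff_quot g t \<longlongrightarrow> c) (at t)" by (simp add: filterlim_def)
  then have "(g has_field_derivative c) (at t)"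
    by (simp add: has_field_derivative_iff diff_quot_def[abs_def])
  then show "g differentiable (at t)" by (auto simp: real_differentiable_def)
qed

lemma differentiable_at_iff_rat_Cauchy_diff_quot:
  assumes "continuous_on UNIV g"
  shows "g differentiable (at t) \<longleftrightarrow> rat_Cauchy_diff_quot g t"
  using assms rat_Cauchy_diff_quot_if_differentiable differentiable_if_rat_Cauchy_diff_quot by blast

lemma borel_measurable_deriv:
  fixes g :: "real \<Rightarrow> real"
  assumes g: "continuous_on UNIV g"
  shows "(\<lambda>t. if g differentiable (at t) then deriv g t else 0) \<in> borel_measurable borel"
proof -
  have [measurable]: "g \<in> borel_measurable borel"
    using g by (rule borel_measurable_continuous_onI)
  have [measurable]: "Measurable.pred borel (\<lambda>t. g differentiable (at t))"
    unfolding differentiable_at_iff_rat_Cauchy_diff_quot[OF g]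
    unfolding rat_Cauchy_diff_quot_def diff_quot_def by measurable
  let ?u = "\<lambda>i t. if g differentiable (at t) then (g (t + 1 / Suc i) - g t) * Suc i else 0"
  show ?thesis
  proof (rule borel_measurable_LIMSEQ_real)
    show "?u i \<in> borel_measurable borel" for i
      by measurable
    fix t
    show "(\<lambda>i. ?u i t) \<longlonglongrightarrow> (if g differentiable (at t) then deriv g t else 0)"
    proof (cases "g differentiable (at t)")
      case True
      note diff_quot_tendsto_deriv[OF True]
      moreover have "filterlim (\<lambda>i. t + 1 / Suc i) (at t) sequentially"
      proof (rule filterlim_atI)
        have "(\<lambda>i. t + inverse (Suc i)) \<longlonglongrightarrow> t + 0"
          by (intro tendsto_intros LIMSEQ_inverse_real_of_nat)
        then show "(\<lambda>i. t + 1 / Suc i) \<longlonglongrightarrow> t" by (simp add: inverse_eq_divide)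
      qed simp
      ultimately have "(\<lambda>i. diff_quot g t (t + 1 / Suc i)) \<longlonglongrightarrow> deriv g t"
        by (rule filterlim_compose)
      then show ?thesis using True by (simp add: diff_quot_def)
    qed simp
  qed
qed

section \<open>Functions with squeezed chord slopes\<close>

definition chord_slopes_squeezed :: "(real \<Rightarrow> real) \<Rightarrow> (real \<Rightarrow> real) \<Rightarrow> real \<Rightarrow> real \<Rightarrow> bool" where
  "chord_slopes_squeezed E G a b \<longleftrightarrow> (\<forall>w1 w2. a \<le> w1 \<longrightarrow> w1 \<le> w2 \<longrightarrow> w2 \<le> b \<longrightarrow>
     (w2 - w1) * G w2 \<le> E w2 - E w1 \<and> E w2 - E w1 \<le> (w2 - w1) * G w1)"

lemma chord_slopes_squeezedD:
  assumes "chord_slopes_squeezed E G a b" "a \<le> w1" "w1 < w2" "w2 \<le> b"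
  shows "G w2 \<le> diff_quot E w1 w2" "diff_quot E w1 w2 \<le> G w1"
  using assms by (auto simp: chord_slopes_squeezed_def diff_quot_def pos_le_divide_eq
      pos_divide_le_eq mult.commute)

lemma diff_quot_sym: "diff_quot E s y = diff_quot E y s"
  by (simp add: diff_quot_def divide_simps) (simp add: algebra_simps)

lemma deriv_eq_of_chord_slopes_squeezed:
  assumes E: "chord_slopes_squeezed E G a b" and s: "a < s" "s < b"
    and E_diff: "E differentiable (at s)"
  shows "deriv E s = G s"
proof -
  have lim: "(diff_quot E s \<longlongrightarrow> deriv E s) (at_right s)" "(diff_quot E s \<longlongrightarrow> deriv E s) (at_left s)"
    using diff_quot_tendsto_deriv[OF E_diff] by (auto simp: filterlim_at_split)
  have "eventually (\<lambda>y. diff_quot E s y \<le> G s) (at_right s)"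
    unfolding eventually_at_right_field using s chord_slopes_squeezedD(2)[OF E]
    by (intro exI[of _ b]) auto
  then have "deriv E s \<le> G s" by (rule tendsto_upperbound[OF lim(1)]) simp
  moreover have "eventually (\<lambda>y. G s \<le> diff_quot E s y) (at_left s)"
    unfolding eventually_at_left_field using s chord_slopes_squeezedD(1)[OF E]
    by (intro exI[of _ a]) (auto simp: diff_quot_sym[of E s])
  then have "G s \<le> deriv E s" by (rule tendsto_lowerbound[OF lim(2)]) simp
  ultimately show ?thesis by simp
qed

lemma has_derivative_of_chord_slopes_squeezed:
  assumes E: "chord_slopes_squeezed E G a b" and s: "a < s" "s < b" and G: "isCont G s"
  shows "(E has_real_derivative G s) (at s)"
proof -
  have "eventually (\<lambda>y. norm (diff_quot E s y - G s) \<le> \<bar>G y - G s\<bar>) (at s)"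
    unfolding eventually_at
  proof (intro exI[of _ "min (s - a) (b - s)"] conjI ballI impI)
    fix y :: real assume "y \<in> UNIV" and y: "y \<noteq> s \<and> dist y s < min (s - a) (b - s)"
    then have "a \<le> y" "y \<le> b" by (auto simp: dist_real_def)
    then show "norm (diff_quot E s y - G s) \<le> \<bar>G y - G s\<bar>"
      using chord_slopes_squeezedD[OF E, of s y] chord_slopes_squeezedD[OF E, of y s] s y
      by (cases "s < y") (auto simp: diff_quot_sym[of E s])
  qed (use s in auto)
  moreover have "((\<lambda>y. \<bar>G y - G s\<bar>) \<longlongrightarrow> 0) (at s)"
    using G by (intro tendsto_rabs_zero) (simp add: isCont_def LIM_zero)
  ultimately have "((\<lambda>y. diff_quot E s y - G s) \<longlongrightarrow> 0) (at s)"
    by (rule Lim_null_comparison)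
  then show ?thesis
    by (simp add: has_field_derivative_iff diff_quot_def[abs_def] LIM_zero_iff)
qed

lemma right_Lim_deriv_of_chord_slopes_squeezed:
  assumes E: "chord_slopes_squeezed E G a b" and t: "a \<le> t" "t < b"
    and G_right: "continuous (at_right t) G" and G_discont: "countable {x. \<not> isCont G x}"
  shows "Lim (at t within ({t<..<b} \<inter> {s. E differentiable (at s)})) (deriv E) = G t"
proof -
  define T where "T = {t<..<b} \<inter> {s. E differentiable (at s)}"
  have "t islimpt T" unfolding islimpt_approachable_real
  proof (intro allI impI)
    fix e :: real assume "e > 0"
    then have "uncountable {t<..<min (t + e) b}" using t by (simp add: uncountable_open_interval)
    then obtain s where s: "s \<in> {t<..<min (t + e) b}" "isCont G s"
      using countable_subset[OF _ G_discont] by blast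
    then have "s \<in> T"
      using has_derivative_of_chord_slopes_squeezed[OF E _ _ s(2)] t
      by (auto simp: T_def real_differentiable_def)
    then show "\<exists>s\<in>T. s \<noteq> t \<and> \<bar>s - t\<bar> < e" using s by auto
  qed
  then have nontriv: "\<not> trivial_limit (at t within T)" by (simp add: trivial_limit_within)
  have "(G \<longlongrightarrow> G t) (at_right t)" using G_right by (simp add: continuous_within)
  then have "(G \<longlongrightarrow> G t) (at t within T)" by (rule tendsto_within_subset) (auto simp: T_def)
  moreover have "eventually (\<lambda>s. G s = deriv E s) (at t within T)"
    unfolding eventually_at_filter using t
    by (intro always_eventually) (auto simp: T_def intro!: deriv_eq_of_chord_slopes_squeezed[OF E, symmetric])
  ultimately have "(deriv E \<longlongrightarrow> G t) (at t within T)" by (rule Lim_transform_eventually)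
  then show ?thesis unfolding T_def[symmetric] by (rule tendsto_Lim[OF nontriv])
qed

lemma (in real_distribution) integral_min_increment_bounds:
  assumes "w1 \<le> w2"
  shows "(w2 - w1) * (1 - cdf M w2) \<le> (\<integral>x. min x w2 - min x w1 \<partial>M)"
    and "(\<integral>x. min x w2 - min x w1 \<partial>M) \<le> (w2 - w1) * (1 - cdf M w1)"
proof -
  have min_diff: "integrable M (\<lambda>x. min x w2 - min x w1)"
    using assms by (intro integrable_const_bound[where B="w2 - w1"]) auto
  have step: "integrable M (\<lambda>x. (w2 - w1) * indicator {w<..} x)" for w
    using assms by (intro integrable_const_bound[where B="w2 - w1"]) (auto simp: indicator_def)
  have step_integral: "(\<integral>x. (w2 - w1) * indicator {w<..} x \<partial>M) = (w2 - w1) * (1 - cdf M w)" for w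
  proof -
    have "prob {w<..} = 1 - prob {..w}"
      using prob_compl[of "{..w}"] by (simp add: Compl_eq_Diff_UNIV[symmetric] Compl_atMost)
    then show ?thesis by (simp add: cdf_def)
  qed
  have "(\<integral>x. (w2 - w1) * indicator {w2<..} x \<partial>M) \<le> (\<integral>x. min x w2 - min x w1 \<partial>M)"
    using assms by (intro integral_mono[OF step min_diff]) (auto simp: indicator_def)
  then show "(w2 - w1) * (1 - cdf M w2) \<le> (\<integral>x. min x w2 - min x w1 \<partial>M)"
    by (simp only: step_integral)
  have "(\<integral>x. min x w2 - min x w1 \<partial>M) \<le> (\<integral>x. (w2 - w1) * indicator {w1<..} x \<partial>M)"
    using assms by (intro integral_mono[OF min_diff step]) (auto simp: indicator_def)
  then show "(\<integral>x. min x w2 - min x w1 \<partial>M) \<le> (w2 - w1) * (1 - cdf M w1)"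
    by (simp only: step_integral)
qed

section \<open>Decreasing quantiles and rearrangements\<close>

definition unit_interval_cdf :: "(real \<Rightarrow> real) \<Rightarrow> bool" where
  "unit_interval_cdf F \<longleftrightarrow> mono F \<and> (\<forall>y. continuous (at_right y) F) \<and>
     (\<forall>y<0. F y = 0) \<and> (\<forall>y\<ge>1. F y = 1)"

(* t |-> F^-1(1 - t), the decreasing quantile function of the distribution with cdf F. *)
definition decr_quantile :: "(real \<Rightarrow> real) \<Rightarrow> real \<Rightarrow> real" where
  "decr_quantile F = gen_inv (\<lambda>w. 1 - F w)"

lemma gen_inv_cong:
  assumes "\<And>t. 0 \<le> t \<Longrightarrow> t < 1 \<Longrightarrow> f t = g t"
  shows "gen_inv f = gen_inv g"
  unfolding gen_inv_def using assms by (intro ext arg_cong[where f=Inf]) auto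

lemma unit_interval_cdf_bounds:
  assumes "unit_interval_cdf F"
  shows "0 \<le> F y" "F y \<le> 1"
  using assms monoD[of F "-1" y] monoD[of F y 1] unfolding unit_interval_cdf_def
  by (cases "y < 0"; cases "y \<ge> 1"; force)+

lemma decr_quantile_bounds: "0 \<le> decr_quantile F x" "decr_quantile F x \<le> 1"
  unfolding decr_quantile_def gen_inv_def
  by (auto intro!: cInf_greatest cInf_lower bdd_belowI[of _ 0])

lemma antimono_decr_quantile: "antimono (decr_quantile F)"
  unfolding decr_quantile_def gen_inv_def
  by (intro antimonoI cInf_superset_mono bdd_belowI[of _ 0]) auto

lemma decr_quantile_le_iff:
  assumes F: "mono F" "continuous (at_right y) F" and y: "0 \<le> y" "y < 1"
  shows "decr_quantile F x \<le> y \<longleftrightarrow> 1 - F y \<le> x"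
proof
  assume "1 - F y \<le> x"
  then show "decr_quantile F x \<le> y"
    using y unfolding decr_quantile_def gen_inv_def by (intro cInf_lower bdd_belowI[of _ 0]) auto
next
  define S where "S = {t\<in>{0..<1}. 1 - F t \<le> x} \<union> {1}"
  assume "decr_quantile F x \<le> y"
  then have Inf_S: "Inf S \<le> y" by (simp add: decr_quantile_def gen_inv_def S_def)
  have "eventually (\<lambda>w. 1 - x \<le> F w) (at_right y)"
    unfolding eventually_at_right_field
  proof (intro exI[of _ 1] conjI allI impI)
    fix w assume w: "y < w" "w < 1"
    then obtain s where "s \<in> S" "s < w"
      using Inf_S cInf_less_iff[of S w] by (force simp: S_def intro: bdd_belowI[of _ 0])
    then show "1 - x \<le> F w" using w monoD[OF F(1), of s w] by (auto simp: S_def)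
  qed (use y in simp)
  then have "1 - x \<le> F y"
    using F(2) by (intro tendsto_lowerbound[where F="at_right y"]) (auto simp: continuous_within)
  then show "1 - F y \<le> x" by simp
qed

lemma measure_decr_quantile_le:
  assumes F: "unit_interval_cdf F"
  shows "measure lborel {t\<in>{0<..<1}. decr_quantile F t \<le> y} = F y"
proof -
  consider "y < 0" | "1 \<le> y" | "0 \<le> y" "y < 1" by linarith
  then show ?thesis
  proof cases
    case 1
    then have "\<not> decr_quantile F t \<le> y" for t using decr_quantile_bounds(1)[of F t] by linarith
    then have empty: "{t\<in>{0<..<1}. decr_quantile F t \<le> y} = {}" by simp
    show ?thesis unfolding empty using F 1 by (simp add: unit_interval_cdf_def)
  next
    case 2
    then have "decr_quantile F t \<le> y" for t using decr_quantile_bounds(2)[of F t] by linarith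
    then have all: "{t\<in>{0<..<1}. decr_quantile F t \<le> y} = {0<..<1}" by auto
    show ?thesis unfolding all using F 2 by (simp add: unit_interval_cdf_def)
  next
    case 3
    have "{t\<in>{0<..<1}. decr_quantile F t \<le> y} = {t\<in>{0<..<1}. 1 - F y \<le> t}"
      using decr_quantile_le_iff[of F y] F 3 by (auto simp: unit_interval_cdf_def)
    also have "\<dots> = (if F y = 1 then {0<..<1} else {1 - F y..<1})"
      using unit_interval_cdf_bounds[OF F, of y] by auto
    finally show ?thesis using unit_interval_cdf_bounds[OF F, of y] by simp
  qed
qed

lemma sets_sublevel_antimono_on:
  fixes g :: "real \<Rightarrow> real"
  assumes g: "antimono_on {0<..<1} g"
  shows "{t\<in>{0<..<1}. g t \<le> y} \<in> sets lborel"
proof -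
  have "mono_on {0<..<1} (\<lambda>t. - g t)" using g by (auto simp: monotone_on_def)
  then have "(\<lambda>t. - g t) \<in> borel_measurable (restrict_space borel {0<..<1})"
    by (rule borel_measurable_mono_on_fnc)
  then have "g \<in> borel_measurable (restrict_space borel {0<..<1})"
    by (simp add: borel_measurable_uminus_eq)
  from measurable_sets[OF this, of "{..y}"]
  have "g -` {..y} \<inter> {0<..<1} \<in> sets (restrict_space borel {0<..<1})"
    by (simp add: space_restrict_space)
  moreover have "g -` {..y} \<inter> {0<..<1} = {t\<in>{0<..<1}. g t \<le> y}" by auto
  ultimately show ?thesis by (simp add: sets_restrict_space_iff)
qed

locale decr_rearrangement =
  fixes F g :: "real \<Rightarrow> real"
  assumes cdf: "unit_interval_cdf F"
    and antimono_g: "antimono_on {0<..<1} g"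
    and distribution: "\<And>y. measure lborel {t\<in>{0<..<1}. g t \<le> y} = F y"
begin

lemma sublevel_measure_bounds:
  assumes t: "t \<in> {0<..<1}"
  shows "g t \<le> y \<Longrightarrow> 1 - t \<le> F y"
    and "\<not> g t \<le> y \<Longrightarrow> F y \<le> 1 - t"
proof -
  let ?D = "{t\<in>{0<..<1}. g t \<le> y}"
  have "{0..1::real} \<in> fmeasurable lborel" by (simp add: fmeasurable_def)
  then have D: "?D \<in> fmeasurable lborel"
    by (rule fmeasurableI2[OF _ _ sets_sublevel_antimono_on[OF antimono_g]]) auto
  {
    assume le: "g t \<le> y"
    have "{t..<1} \<subseteq> ?D"
    proof
      fix s assume s: "s \<in> {t..<1}"
      then have "g s \<le> g t" using antimono_g t by (simp add: monotone_on_def)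
      then show "s \<in> ?D" using s t le by simp
    qed
    then have "measure lborel {t..<1} \<le> measure lborel ?D"
      by (rule measure_mono_fmeasurable[OF _ _ D]) auto
    then show "1 - t \<le> F y" using t distribution[of y] by simp
  next
    assume gt: "\<not> g t \<le> y"
    have "?D \<subseteq> {t<..<1}"
    proof
      fix s assume s: "s \<in> ?D"
      have "t < s"
      proof (rule ccontr)
        assume "\<not> t < s"
        then have "g t \<le> g s" using antimono_g s t by (simp add: monotone_on_def)
        then show False using s gt by simp
      qed
      then show "s \<in> {t<..<1}" using s by simp
    qed
    then have "measure lborel ?D \<le> measure lborel {t<..<1}"
      by (rule measure_mono_fmeasurable[OF _ fmeasurableD[OF D]]) (use t in \<open>simp add: fmeasurable_def\<close>)
    then show "F y \<le> 1 - t" using t distribution[of y] by simp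
  }
qed

lemma decr_quantile_le:
  assumes t: "t \<in> {0<..<1}"
  shows "decr_quantile F t \<le> g t"
proof (cases "g t < 1")
  case True
  have "g t \<ge> 0"
  proof (rule ccontr)
    assume "\<not> g t \<ge> 0"
    then have "F (g t) = 0" using cdf by (simp add: unit_interval_cdf_def)
    then show False using sublevel_measure_bounds(1)[OF t order_refl] t by simp
  qed
  moreover have "1 - F (g t) \<le> t" using sublevel_measure_bounds(1)[OF t order_refl] by simp
  ultimately show ?thesis
    using decr_quantile_le_iff[of F "g t" t] cdf True by (simp add: unit_interval_cdf_def)
qed (use decr_quantile_bounds(2)[of F t] in simp)

lemma le_decr_quantile:
  assumes s: "0 \<le> s" "s < t" and t: "t < 1"
  shows "g t \<le> decr_quantile F s"
proof (rule ccontr)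
  let ?y = "decr_quantile F s"
  assume gt: "\<not> g t \<le> ?y"
  have "1 - F ?y \<le> s"
  proof (cases "?y < 1")
    case True
    then show ?thesis
      using decr_quantile_le_iff[of F ?y s] decr_quantile_bounds(1)[of F s] cdf
      by (simp add: unit_interval_cdf_def)
  next
    case False
    then have "F ?y = 1" using cdf by (simp add: unit_interval_cdf_def)
    then show ?thesis using s by simp
  qed
  moreover have "F ?y \<le> 1 - t" using sublevel_measure_bounds(2)[OF _ gt] s t by simp
  ultimately show False using s by simp
qed

lemma eq_decr_quantile_at_isCont:
  assumes t: "t \<in> {0<..<1}" and cont: "isCont (decr_quantile F) t"
  shows "g t = decr_quantile F t"
proof -
  have "(decr_quantile F \<longlongrightarrow> decr_quantile F t) (at_left t)"
    using cont by (simp add: isCont_def filterlim_at_split)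
  moreover have "eventually (\<lambda>s. g t \<le> decr_quantile F s) (at_left t)"
    unfolding eventually_at_left_field using t le_decr_quantile[of _ t]
    by (intro exI[of _ 0]) auto
  ultimately have "g t \<le> decr_quantile F t"
    by (intro tendsto_lowerbound[where F="at_left t"]) (use t in auto)
  then show ?thesis using decr_quantile_le[OF t] by simp
qed

lemma integral_eq_decr_quantile:
  assumes u: "u \<le> 1"
  shows "integral {0..u} g = integral {0..u} (decr_quantile F)"
proof (rule integral_spike)
  let ?N = "{0, 1} \<union> {t. \<not> isCont (decr_quantile F) t}"
  have "countable {t. \<not> isCont (\<lambda>t. - decr_quantile F t) t}"
    using antimono_decr_quantile[of F] by (intro mono_ctble_discont) (auto simp: mono_def antimono_def)
  moreover have "{t. \<not> isCont (decr_quantile F) t} \<subseteq> {t. \<not> isCont (\<lambda>t. - decr_quantile F t) t}"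
    by (auto dest: isCont_minus)
  ultimately have "countable ?N" by (auto intro: countable_subset)
  then show "negligible ?N"
    by (simp add: negligible_iff_null_sets null_sets_completionI countable_imp_null_set_lborel)
  show "decr_quantile F t = g t" if "t \<in> {0..u} - ?N" for t
    using that u eq_decr_quantile_at_isCont[of t] by auto
qed

end

lemma integral_decr_rearr_eq_decr_quantile:
  assumes F: "unit_interval_cdf F"
    and h: "\<And>y. measure lborel {t\<in>{0<..<1}. h t \<le> y} = F y"
    and u: "u \<le> 1"
  shows "integral {0..u} (decr_rearr h) = integral {0..u} (decr_quantile F)"
proof -
  define P where "P g \<longleftrightarrow> (\<forall>s t. 0 < s \<longrightarrow> s \<le> t \<longrightarrow> t < 1 \<longrightarrow> g t \<le> g s) \<and>
    (\<forall>y. measure lborel {t\<in>{0<..<1}. g t \<le> y} = measure lborel {t\<in>{0<..<1}. h t \<le> y})"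
    for g :: "real \<Rightarrow> real"
  have "P (decr_quantile F)"
    using antimono_decr_quantile[of F] measure_decr_quantile_le[OF F] h
    by (simp add: P_def antimono_def)
  then have "P (SOME g. P g)" by (rule someI[of P])
  moreover have "decr_rearr h = (SOME g. P g)" by (simp add: decr_rearr_def P_def)
  ultimately have "P (decr_rearr h)" by simp
  then interpret decr_rearrangement F "decr_rearr h"
    using F h by unfold_locales (simp_all add: P_def monotone_on_def)
  show ?thesis using u by (rule integral_eq_decr_quantile)
qed

section \<open>Copulas and the upper product with the independence copula\<close>

lemma copula_increment_bounds:
  assumes C: "is_copula C" and v: "v \<in> {0..1}" and ab: "0 \<le> a" "a \<le> b" "b \<le> 1"
  shows "0 \<le> C v b - C v a" "C v b - C v a \<le> b - a"
proof -
  have rect: "C u2 w2 - C u2 w1 - C u1 w2 + C u1 w1 \<ge> 0"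
    if "0 \<le> u1" "u1 \<le> u2" "u2 \<le> 1" "0 \<le> w1" "w1 \<le> w2" "w2 \<le> 1" for u1 u2 w1 w2
    using C that unfolding is_copula_def by blast
  have margins: "C 0 w = 0" "C 1 w = w" if "w \<in> {0..1}" for w
    using C that unfolding is_copula_def by blast+
  show "0 \<le> C v b - C v a"
    using rect[of 0 v a b] margins[of a] margins[of b] v ab by auto
  show "C v b - C v a \<le> b - a"
    using rect[of v 1 a b] margins[of a] margins[of b] v ab by auto
qed

lemma copula_Lipschitz2:
  assumes C: "is_copula C" and v: "v \<in> {0..1}" and ab: "a \<in> {0..1}" "b \<in> {0..1}"
  shows "\<bar>C v a - C v b\<bar> \<le> \<bar>a - b\<bar>"
  using copula_increment_bounds[OF C v, of a b] copula_increment_bounds[OF C v, of b a] ab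
  by (cases "a \<le> b") auto

lemma diff_quot_copula_bounds:
  assumes C: "is_copula C" and v: "v \<in> {0..1}" and t: "t \<in> {0..1}" and y: "y \<in> {0..1}" "y \<noteq> t"
  shows "0 \<le> diff_quot (C v) t y" "diff_quot (C v) t y \<le> 1"
proof -
  have "0 \<le> diff_quot (C v) t y \<and> diff_quot (C v) t y \<le> 1"
  proof (cases "t < y")
    case True
    then show ?thesis using copula_increment_bounds[OF C v, of t y] t y
      by (simp add: diff_quot_def divide_simps)
  next
    case False
    then have "y < t" using y by simp
    then show ?thesis using copula_increment_bounds[OF C v, of y t] t y
      by (simp add: diff_quot_sym[of "C v" t] diff_quot_def divide_simps)
  qed
  then show "0 \<le> diff_quot (C v) t y" "diff_quot (C v) t y \<le> 1" by simp_all
qed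

lemma partial2_copula_bounds:
  assumes C: "is_copula C" and v: "v \<in> {0..1}" and t: "t \<in> {0<..<1}"
  shows "0 \<le> partial2 C v t" "partial2 C v t \<le> 1"
proof -
  have deriv_bounds: "0 \<le> deriv (C v) t \<and> deriv (C v) t \<le> 1" if diff: "C v differentiable (at t)"
  proof -
    have "eventually (\<lambda>y. 0 \<le> diff_quot (C v) t y \<and> diff_quot (C v) t y \<le> 1) (at t)"
      unfolding eventually_at
    proof (intro exI[of _ "min t (1 - t)"] conjI ballI impI)
      fix y :: real assume "y \<in> UNIV" and y: "y \<noteq> t \<and> dist y t < min t (1 - t)"
      then have "0 \<le> y" "y \<le> 1" by (auto simp: dist_real_def)
      then show "0 \<le> diff_quot (C v) t y" "diff_quot (C v) t y \<le> 1"
        using diff_quot_copula_bounds[OF C v, of t y] t y by auto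
    qed (use t in auto)
    then have "0 \<le> deriv (C v) t" "deriv (C v) t \<le> 1"
      using diff_quot_tendsto_deriv[OF diff]
      by (auto intro: tendsto_lowerbound tendsto_upperbound elim: eventually_mono)
    then show ?thesis by simp
  qed
  show "0 \<le> partial2 C v t" "partial2 C v t \<le> 1"
    using deriv_bounds by (auto simp: partial2_def)
qed

lemma borel_measurable_partial2_copula:
  assumes C: "is_copula C" and v: "v \<in> {0..1}"
  shows "partial2 C v \<in> borel_measurable (restrict_space lborel {0<..<1})"
proof -
  (* C v vanishes outside [0,1], so it need not be continuous; clamping the argument gives a
     continuous function that agrees with C v on (0,1). *)
  define g where "g t = C v (max 0 (min 1 t))" for t
  have "1-lipschitz_on UNIV g"
  proof (rule lipschitz_onI)
    fix x y :: real
    have "\<bar>C v (max 0 (min 1 x)) - C v (max 0 (min 1 y))\<bar> \<le> \<bar>max 0 (min 1 x) - max 0 (min 1 y)\<bar>"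
      by (rule copula_Lipschitz2[OF C v]) auto
    also have "\<dots> \<le> \<bar>x - y\<bar>" by (simp add: abs_real_def max_def min_def)
    finally show "dist (g x) (g y) \<le> 1 * dist x y" by (simp add: g_def dist_real_def)
  qed simp
  then have "(\<lambda>t. if g differentiable (at t) then deriv g t else 0) \<in> borel_measurable borel"
    by (intro borel_measurable_deriv lipschitz_on_continuous_on)
  then have "(\<lambda>t. if g differentiable (at t) then deriv g t else 0)
      \<in> borel_measurable (restrict_space lborel {0<..<1})"
    by (intro measurable_restrict_space1) (simp add: measurable_lborel1)
  moreover have "partial2 C v t = (if g differentiable (at t) then deriv g t else 0)"
    if "t \<in> {0<..<1}" for t
  proof -
    have "eventually (\<lambda>s. C v s = g s) (nhds t)"
      using eventually_nhds_in_open[of "{0<..<1}" t] that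
      by (auto simp: g_def elim!: eventually_mono)
    then have "(C v has_field_derivative D) (at t) \<longleftrightarrow> (g has_field_derivative D) (at t)" for D
      by (intro DERIV_cong_ev) auto
    moreover have "deriv (C v) t = deriv g t"
      using \<open>eventually (\<lambda>s. C v s = g s) (nhds t)\<close> by (rule deriv_cong_ev) simp
    ultimately show ?thesis by (simp add: partial2_def real_differentiable_def)
  qed
  ultimately show ?thesis
    by (subst measurable_cong[where g="\<lambda>t. if g differentiable (at t) then deriv g t else 0"])
       (auto simp: space_restrict_space)
qed

definition partial2_law :: "(real \<Rightarrow> real \<Rightarrow> real) \<Rightarrow> real \<Rightarrow> real measure" where
  "partial2_law C v = distr (restrict_space lborel {0<..<1}) borel (partial2 C v)"

lemma prob_space_unit_interval: "prob_space (restrict_space lborel {0<..<1::real})"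
  by (rule prob_space_restrict_space) auto

lemma real_distribution_partial2_law:
  assumes C: "is_copula C" and v: "v \<in> {0..1}"
  shows "real_distribution (partial2_law C v)"
  unfolding partial2_law_def
  by (rule prob_space.real_distribution_distr[OF prob_space_unit_interval
        borel_measurable_partial2_copula[OF C v]])

lemma cdf_partial2_law:
  assumes C: "is_copula C" and v: "v \<in> {0..1}"
  shows "cdf (partial2_law C v) y = measure lborel {t\<in>{0<..<1}. partial2 C v t \<le> y}"
proof -
  have "cdf (partial2_law C v) y
      = measure (restrict_space lborel {0<..<1}) (partial2 C v -` {..y} \<inter> {0<..<1})"
    unfolding cdf_def partial2_law_def
    using borel_measurable_partial2_copula[OF C v]
    by (subst measure_distr) (auto simp: space_restrict_space)
  also have "\<dots> = measure lborel {t\<in>{0<..<1}. partial2 C v t \<le> y}"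
    by (subst measure_restrict_space) (auto intro!: arg_cong[where f="measure lborel"])
  finally show ?thesis .
qed

lemma unit_interval_cdf_partial2_law:
  assumes C: "is_copula C" and v: "v \<in> {0..1}"
  shows "unit_interval_cdf (cdf (partial2_law C v))"
proof -
  interpret real_distribution "partial2_law C v" by (rule real_distribution_partial2_law[OF C v])
  show ?thesis unfolding unit_interval_cdf_def
  proof (intro conjI allI impI)
    show "mono (cdf (partial2_law C v))" by (intro monoI cdf_nondecreasing)
    show "continuous (at_right y) (cdf (partial2_law C v))" for y by (rule cdf_is_right_cont)
    fix y :: real
    assume "y < 0"
    then have "{t\<in>{0<..<1}. partial2 C v t \<le> y} = {}"
      using partial2_copula_bounds(1)[OF C v] by force
    then show "cdf (partial2_law C v) y = 0" by (simp only: cdf_partial2_law[OF C v]) simp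
  next
    fix y :: real
    assume "1 \<le> y"
    then have "{t\<in>{0<..<1}. partial2 C v t \<le> y} = {0<..<1}"
      using partial2_copula_bounds(2)[OF C v] by force
    then show "cdf (partial2_law C v) y = 1" by (simp only: cdf_partial2_law[OF C v]) simp
  qed
qed

lemma partial2_PiC:
  assumes w: "w \<in> {0..1}" and t: "t \<in> {0<..<1}"
  shows "partial2 PiC w t = w"
proof -
  have "eventually (\<lambda>s. PiC w s = w * s) (nhds t)"
    using eventually_nhds_in_open[of "{0<..<1}" t] t w
    by (auto simp: PiC_def restrict_sq_def elim!: eventually_mono)
  then have "(PiC w has_field_derivative w) (at t)"
    by (subst DERIV_cong_ev[OF refl _ refl]) (auto intro!: derivative_eq_intros)
  then show ?thesis
    by (auto simp: partial2_def real_differentiable_def intro: DERIV_imp_deriv)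
qed

lemma integrable_min_partial2:
  assumes C: "is_copula C" and v: "v \<in> {0..1}" and w: "w \<in> {0..1}"
  shows "integrable (restrict_space lborel {0<..<1}) (\<lambda>t. min (partial2 C v t) w)"
proof -
  interpret prob_space "restrict_space lborel {0<..<1::real}" by (rule prob_space_unit_interval)
  have "(\<lambda>t. min (partial2 C v t) w) \<in> borel_measurable (restrict_space lborel {0<..<1})"
    using borel_measurable_partial2_copula[OF C v] by measurable
  then show ?thesis
    using partial2_copula_bounds[OF C v] w
    by (intro integrable_const_bound[where B=1] AE_I2) (auto simp: space_restrict_space)
qed

lemma integrable_min_partial2_law:
  assumes C: "is_copula C" and v: "v \<in> {0..1}" and w: "w \<in> {0..1}"
  shows "integrable (partial2_law C v) (\<lambda>x. min x w)"
  unfolding partial2_law_def using borel_measurable_partial2_copula[OF C v]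
  by (subst integrable_distr_eq) (auto intro: integrable_min_partial2[OF C v w])

lemma upper_prod_PiC_eq_integral:
  assumes C: "is_copula C" and v: "v \<in> {0..1}" and w: "w \<in> {0..1}"
  shows "upper_prod C PiC v w = (\<integral>x. min x w \<partial>partial2_law C v)"
proof -
  let ?U = "restrict_space lborel {0<..<1::real}"
  let ?f = "\<lambda>t. min (partial2 C v t) w"
  have f_int: "set_integrable lborel {0<..<1} ?f"
    using integrable_min_partial2[OF C v w] by (simp add: set_integrable_def integrable_restrict_space)
  have "upper_prod C PiC v w = integral {0..1} (\<lambda>t. min (partial2 C v t) (partial2 PiC w t))"
    using v w by (simp add: upper_prod_def restrict_sq_def)
  also have "\<dots> = integral {0<..<1} (\<lambda>t. min (partial2 C v t) (partial2 PiC w t))"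
    by (rule integral_spike_set; rule negligible_subset[of "{0, 1}"]) auto
  also have "\<dots> = integral {0<..<1} ?f"
    using partial2_PiC[OF w] by (intro integral_cong) simp
  also have "\<dots> = (LINT t:{0<..<1}|lborel. ?f t)"
    using set_borel_integral_eq_integral(2)[OF f_int] by simp
  also have "\<dots> = integral\<^sup>L ?U ?f"
    by (simp add: set_lebesgue_integral_def integral_restrict_space)
  also have "\<dots> = (\<integral>x. min x w \<partial>partial2_law C v)"
    unfolding partial2_law_def
    using borel_measurable_partial2_copula[OF C v] by (subst integral_distr) auto
  finally show ?thesis .
qed

lemma chord_slopes_squeezed_upper_prod_PiC:
  assumes C: "is_copula C" and v: "v \<in> {0..1}"
  shows "chord_slopes_squeezed (upper_prod C PiC v) (\<lambda>w. 1 - cdf (partial2_law C v) w) 0 1"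
  unfolding chord_slopes_squeezed_def
proof (intro allI impI)
  interpret real_distribution "partial2_law C v" by (rule real_distribution_partial2_law[OF C v])
  fix w1 w2 :: real assume w: "0 \<le> w1" "w1 \<le> w2" "w2 \<le> 1"
  have "upper_prod C PiC v w2 - upper_prod C PiC v w1 = (\<integral>x. min x w2 - min x w1 \<partial>partial2_law C v)"
    using w by (simp add: upper_prod_PiC_eq_integral[OF C v] integrable_min_partial2_law[OF C v])
  then show "(w2 - w1) * (1 - cdf (partial2_law C v) w2) \<le> upper_prod C PiC v w2 - upper_prod C PiC v w1 \<and>
      upper_prod C PiC v w2 - upper_prod C PiC v w1 \<le> (w2 - w1) * (1 - cdf (partial2_law C v) w1)"
    using integral_min_increment_bounds[OF w(2)] by simp
qed

lemma right_partial2_upper_prod_PiC: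
  assumes C: "is_copula C" and v: "v \<in> {0..1}" and t: "0 \<le> t" "t < 1"
  shows "right_partial2 (upper_prod C PiC) v t = 1 - cdf (partial2_law C v) t"
proof -
  interpret real_distribution "partial2_law C v" by (rule real_distribution_partial2_law[OF C v])
  have "continuous (at_right t) (\<lambda>w. 1 - cdf (partial2_law C v) w)"
    by (intro continuous_intros cdf_is_right_cont)
  moreover have "countable {x. \<not> isCont (cdf (partial2_law C v)) x}"
    by (intro mono_ctble_discont monoI cdf_nondecreasing)
  moreover have "{x. \<not> isCont (\<lambda>w. 1 - cdf (partial2_law C v) w) x}
      \<subseteq> {x. \<not> isCont (cdf (partial2_law C v)) x}"
    by auto
  ultimately show ?thesis
    unfolding right_partial2_def
    by (intro right_Lim_deriv_of_chord_slopes_squeezed[OF chord_slopes_squeezed_upper_prod_PiC[OF C v] t])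
       (auto intro: countable_subset)
qed

lemma rearranged_eq_S_op_upper_prod_PiC:
  assumes C: "is_copula C"
  shows "rearranged C = S_op (upper_prod C PiC)"
proof (intro ext)
  fix v u :: real
  show "rearranged C v u = S_op (upper_prod C PiC) v u"
  proof (cases "v \<in> {0..1} \<and> u \<in> {0..1}")
    case True
    then have v: "v \<in> {0..1}" and u: "u \<le> 1" by auto
    have "gen_inv (right_partial2 (upper_prod C PiC) v) = decr_quantile (cdf (partial2_law C v))"
      unfolding decr_quantile_def by (intro gen_inv_cong right_partial2_upper_prod_PiC[OF C v])
    moreover have "integral {0..u} (decr_rearr (partial2 C v))
        = integral {0..u} (decr_quantile (cdf (partial2_law C v)))"
      using unit_interval_cdf_partial2_law[OF C v] cdf_partial2_law[OF C v] u
      by (intro integral_decr_rearr_eq_decr_quantile) auto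
    ultimately show ?thesis using True by (simp add: rearranged_def S_op_def restrict_sq_def)
  qed (auto simp: rearranged_def S_op_def restrict_sq_def)
qed

theorem mainTheorem5:
  fixes mu :: "(real \<Rightarrow> real \<Rightarrow> real) \<Rightarrow> real"
    and C :: "real \<Rightarrow> real \<Rightarrow> real"
  assumes mu_range: "\<forall>D. is_SI_copula D \<longrightarrow> 0 \<le> mu D \<and> mu D \<le> 1"
    and mu_zero: "\<forall>D. is_SI_copula D \<longrightarrow> (mu D = 0 \<longleftrightarrow> D = PiC)"
    and mu_one: "\<forall>D. is_SI_copula D \<longrightarrow> (mu D = 1 \<longleftrightarrow> D = MC)"
    and C: "is_copula C"
  shows "Rmu mu C = mu (S_op (upper_prod C PiC))"
  unfolding Rmu_def rearranged_eq_S_op_upper_prod_PiC[OF C] ..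

end
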